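(* Let $\mathcal O,K,k,\nu,\pi$ be as in the context. Let $\alpha\in\mathcal O((X^{-1}))$ with $\mathrm{LC}(\alpha)\in\mathcal O^*$ and $\operatorname{ord}(\alpha)\le0$, and let $\gamma=\bar\alpha\in k((X^{-1}))$. Assume $\alpha\notin K(X)$ and $\gamma\notin k(X)$. Let $(p_n,q_n)$ ($n\ge0$) be the canonical convergents of $\alpha$ over $K$ and $(u_m,v_m)$ ($m\ge0$) those of $\gamma$ over $k$. Then for every $n\ge0$, the pair $(\pi^{-\nu(q_n)}p_n,\pi^{-\nu(q_n)}q_n)$ lies in $\mathcal O[X]^2$, and its reduction $(\tilde p_n,\tilde q_n)\in k[X]^2$ satisfies $\tilde q_n\ne0$ and $\operatorname{ord}(\tilde p_n-\gamma\tilde q_n)>\deg\tilde q_n$. Moreover there are a unique $\lambda(n)\in\mathbb N_0$ and some $h_n\in k[X]\setminus\{0\}$ with $(\tilde p_n,\tilde q_n)=h_n\cdot(u_{\lambda(n)},v_{\lambda(n)})$. The map $\lambda:\mathbb N_0\to\mathbb N_0$ is non-decreasing and surjective, and if $n=\min\lambda^{-1}(m)$ then $\deg v_m=\deg q_n$.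
   Context: $\mathcal O$ is a discrete valuation ring with fraction field $K$, uniformiser $\pi$, valuation $\nu$ with $\nu(\pi)=1$, residue field $k$ of characteristic $\ne2$; bars denote coefficientwise reduction modulo the maximal ideal. For a polynomial or Laurent series $u=\sum u_nX^n$ over $K$, $\nu(u)=\inf_n\nu(u_n)$ (Gauss valuation). $F((X^{-1}))$ is the field of Laurent series $\sum_{n\le N}u_nX^n$ with $\operatorname{ord}(\sum_{n\le N}u_nX^n)=-N$ if $u_N\ne0$, and $\mathrm{LC}$ denotes the leading coefficient; $\mathcal O((X^{-1}))$ consists of those with all coefficients in $\mathcal O$. $\lfloor\alpha\rfloor$ is the unique polynomial with $\operatorname{ord}(\alpha-\lfloor\alpha\rfloor)>0$. Continued fraction: $\alpha_0=\alpha$, $\alpha_{n+1}=1/(\alpha_n-\lfloor\alpha_n\rfloor)$, partial quotients $a_n=\lfloor\alpha_n\rfloor$; canonical convergents $p_{-1}=1,q_{-1}=0,p_0=a_0,q_0=1$, $p_n=a_np_{n-1}+p_{n-2}$, $q_n=a_nq_{n-1}+q_{n-2}$. *)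

theory Defs
  imports "HOL-Computational_Algebra.Computational_Algebra"
begin

text \<open>Laurent series in X^{-1} over a field F are represented as formal Laurent
series in the variable T = X^{-1} (type 'a fls).  The coefficient of X^n is the
coefficient of T^(-n).  Hence ord (in the paper's sense) is fls_subdegree and the
leading coefficient is the coefficient at T^(ord).\<close>

definition poly_fls :: "'a::comm_ring_1 poly \<Rightarrow> 'a fls" where
  "poly_fls p = (\<Sum>i\<le>degree p. fls_const (coeff p i) * fls_X_inv ^ i)"

text \<open>Polynomial part (floor): coefficients of X^i for i >= 0.\<close>
definition fls_floor :: "'a::comm_ring_1 fls \<Rightarrow> 'a poly" where
  "fls_floor f = fls_prpart f + [: (fls_nth f 0) :]"

definition fls_ord :: "'a::zero fls \<Rightarrow> int" where
  "fls_ord f = fls_subdegree f"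

definition fls_LC :: "'a::zero fls \<Rightarrow> 'a" where
  "fls_LC f = fls_nth f (fls_subdegree f)"

definition is_rational_fls :: "'a::field fls \<Rightarrow> bool" where
  "is_rational_fls f \<longleftrightarrow> (\<exists>p q. q \<noteq> 0 \<and> f * poly_fls q = poly_fls p)"

primrec cf_alpha :: "'a::field fls \<Rightarrow> nat \<Rightarrow> 'a fls" where
  "cf_alpha f 0 = f"
| "cf_alpha f (Suc n) = inverse (cf_alpha f n - poly_fls (fls_floor (cf_alpha f n)))"

definition cf_a :: "'a::field fls \<Rightarrow> nat \<Rightarrow> 'a poly" where
  "cf_a f n = fls_floor (cf_alpha f n)"

text \<open>Canonical convergents p_n, q_n for n >= 0 (with p_{-1} = 1, q_{-1} = 0).\<close>
fun cf_p :: "'a::field fls \<Rightarrow> nat \<Rightarrow> 'a poly" where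
  "cf_p f 0 = cf_a f 0"
| "cf_p f (Suc 0) = cf_a f 1 * cf_a f 0 + 1"
| "cf_p f (Suc (Suc n)) = cf_a f (Suc (Suc n)) * cf_p f (Suc n) + cf_p f n"

fun cf_q :: "'a::field fls \<Rightarrow> nat \<Rightarrow> 'a poly" where
  "cf_q f 0 = 1"
| "cf_q f (Suc 0) = cf_a f 1"
| "cf_q f (Suc (Suc n)) = cf_a f (Suc (Suc n)) * cf_q f (Suc n) + cf_q f n"

text \<open>Discrete valuation on a field K, given on nonzero elements (nu 0 = infinity
is handled by always excluding 0), normalised so that it is surjective onto Z
(a uniformiser pi has value 1).\<close>
definition discrete_valuation :: "('a::field \<Rightarrow> int) \<Rightarrow> bool" where
  "discrete_valuation \<nu> \<longleftrightarrow>
     (\<forall>x y. x \<noteq> 0 \<longrightarrow> y \<noteq> 0 \<longrightarrow> \<nu> (x * y) = \<nu> x + \<nu> y) \<and>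
     (\<forall>x y. x \<noteq> 0 \<longrightarrow> y \<noteq> 0 \<longrightarrow> x + y \<noteq> 0 \<longrightarrow> min (\<nu> x) (\<nu> y) \<le> \<nu> (x + y))"

definition val_ring :: "('a::field \<Rightarrow> int) \<Rightarrow> 'a set" where
  "val_ring \<nu> = {x. x = 0 \<or> 0 \<le> \<nu> x}"

definition max_ideal :: "('a::field \<Rightarrow> int) \<Rightarrow> 'a set" where
  "max_ideal \<nu> = {x. x = 0 \<or> 0 < \<nu> x}"

definition residue_map :: "('a::field \<Rightarrow> int) \<Rightarrow> ('a \<Rightarrow> 'b::field) \<Rightarrow> bool" where
  "residue_map \<nu> red \<longleftrightarrow>
     (\<forall>x\<in>val_ring \<nu>. \<forall>y\<in>val_ring \<nu>. red (x + y) = red x + red y \<and> red (x * y) = red x * red y) \<and>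
     red 1 = 1 \<and>
     (\<forall>x\<in>val_ring \<nu>. red x = 0 \<longleftrightarrow> x \<in> max_ideal \<nu>) \<and>
     red ` val_ring \<nu> = UNIV"

definition gauss_val :: "('a::field \<Rightarrow> int) \<Rightarrow> 'a poly \<Rightarrow> int" where
  "gauss_val \<nu> p = Min {\<nu> (coeff p i) | i. coeff p i \<noteq> 0}"

end

theory Submission
  imports Defs
begin

text \<open>
  Let \<open>r\<^sub>n = p\<^sub>n - \<alpha> q\<^sub>n\<close>. Since \<open>r\<^sub>n = \<plusminus>\<beta>\<^sub>0 \<cdots> \<beta>\<^sub>n\<close>, where \<open>\<beta>\<^sub>i = \<alpha>\<^sub>i - a\<^sub>i\<close>
  has order \<open>deg a\<^sub>i\<^sub>+\<^sub>1\<close>, the remainder \<open>r\<^sub>n\<close> has order \<open>deg q\<^sub>n\<^sub>+\<^sub>1 > 0\<close>.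
  Dividing \<open>(p\<^sub>n, q\<^sub>n)\<close> by \<open>\<pi>\<close> to the power \<open>\<nu>(q\<^sub>n)\<close> gives a pair \<open>(P, Q)\<close>
  with \<open>Q\<close> primitive. As \<open>P - \<alpha> Q\<close> still has positive order, \<open>P\<close> is the
  polynomial part of \<open>\<alpha> Q\<close>, hence integral, and reduction commutes with forming
  \<open>P - \<alpha> Q\<close>. So the reductions \<open>(P', Q')\<close> satisfy \<open>Q' \<noteq> 0\<close> and
  \<open>ord (P' - \<gamma> Q') \<ge> deg q\<^sub>n\<^sub>+\<^sub>1 > deg q\<^sub>n \<ge> deg Q'\<close>.

  By Legendre's theorem such a pair is a polynomial multiple of a convergent
  \<open>(u\<^sub>l, v\<^sub>l)\<close> of \<open>\<gamma>\<close>, and comparing degrees gives \<open>deg v\<^sub>l \<le> deg q\<^sub>n\<close> and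
  \<open>deg q\<^sub>n\<^sub>+\<^sub>1 \<le> deg v\<^sub>l\<^sub>+\<^sub>1\<close>, which pins down \<open>l = \<lambda>(n)\<close>. These interlacing
  inequalities between two strictly increasing degree sequences give monotonicity
  and surjectivity of \<open>\<lambda>\<close>, and \<open>deg v\<^sub>m = deg q\<^sub>n\<close> at the first \<open>n\<close> with \<open>\<lambda>(n) = m\<close>.
\<close>

section \<open>Interlacing strictly increasing sequences\<close>

lemma strict_mono_bracket_exists:
  fixes g :: "nat \<Rightarrow> nat"
  assumes "strict_mono g" and "g 0 \<le> d"
  shows "\<exists>l. g l \<le> d \<and> d < g (Suc l)"
proof -
  have "Suc d \<le> g (Suc d)"
    using strict_mono_imp_increasing[OF assms(1)] .
  then have "\<exists>L. d < g L"
    by (intro exI[of _ "Suc d"]) simp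
  then obtain L where L: "d < g L" and below: "\<And>l. l < L \<Longrightarrow> \<not> d < g l"
    unfolding exists_least_iff[of "\<lambda>L. d < g L"] by blast
  from L assms(2) have "L \<noteq> 0"
    by (intro notI) simp
  then obtain l where l: "L = Suc l"
    using not0_implies_Suc by blast
  then have "g l \<le> d"
    using below[of l] by simp
  with L l show ?thesis
    by blast
qed

lemma strict_mono_bracket_unique:
  fixes g :: "nat \<Rightarrow> nat"
  assumes "strict_mono g" "g l \<le> d" "d < g (Suc l)" "g l' \<le> d" "d < g (Suc l')"
  shows "l = l'"
proof -
  have "g l < g (Suc l')" "g l' < g (Suc l)"
    using assms(2-5) by linarith+
  then have "l < Suc l'" "l' < Suc l"
    by (simp_all add: strict_mono_less[OF assms(1)])
  then show ?thesis
    by simp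
qed

context
  fixes V D lam :: "nat \<Rightarrow> nat"
  assumes V: "strict_mono V" and D: "strict_mono D" "D 0 = 0"
    and lower: "\<And>n. V (lam n) \<le> D n" and upper: "\<And>n. D (Suc n) \<le> V (Suc (lam n))"
begin

lemma interlacing_bracket: "D n < V (Suc (lam n))"
  using upper[of n] strict_monoD[OF D(1), of n "Suc n"] by simp

lemma interlacing_mono: "mono lam"
proof (rule monoI)
  fix n n' :: nat
  assume "n \<le> n'"
  then have "D n \<le> D n'"
    by (simp add: strict_mono_less_eq[OF D(1)])
  then have "V (lam n) < V (Suc (lam n'))"
    using lower[of n] interlacing_bracket[of n'] by linarith
  then show "lam n \<le> lam n'"
    by (simp add: strict_mono_less[OF V])
qed

lemma interlacing_first_index:
  fixes m :: nat
  defines "n \<equiv> LEAST j. V m \<le> D j"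
  shows "lam n = m" and "D n = V m" and "\<And>j. j < n \<Longrightarrow> lam j < m"
proof -
  have "V m \<le> D (V m)"
    using strict_mono_imp_increasing[OF D(1)] .
  then have first: "V m \<le> D n"
    unfolding n_def by (rule LeastI)
  show before: "lam j < m" if "j < n" for j
  proof -
    have "D j < V m"
      using not_less_Least[OF that[unfolded n_def]] by simp
    then have "V (lam j) < V m"
      using lower[of j] by linarith
    then show ?thesis
      by (simp add: strict_mono_less[OF V])
  qed
  have "D n \<le> V m"
  proof (cases n)
    case (Suc j)
    then have "Suc (lam j) \<le> m"
      using before[of j] by simp
    then have "V (Suc (lam j)) \<le> V m"
      by (simp add: strict_mono_less_eq[OF V])
    with upper[of j] Suc show ?thesis
      by simp
  qed (simp add: D(2))
  with first show "D n = V m"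
    by simp
  have "V (lam n) < V (Suc m)" "V m < V (Suc (lam n))"
    using lower[of n] interlacing_bracket[of n] strict_monoD[OF V, of m "Suc m"] \<open>D n = V m\<close>
    by linarith+
  then show "lam n = m"
    by (simp add: strict_mono_less[OF V])
qed

lemma interlacing_surj: "surj lam"
  using interlacing_first_index(1) by (rule surjI)

lemma interlacing_Least: "D (LEAST n. lam n = m) = V m"
proof -
  have "(LEAST n. lam n = m) = (LEAST j. V m \<le> D j)"
  proof (rule Least_equality)
    show "lam (LEAST j. V m \<le> D j) = m"
      by (rule interlacing_first_index(1))
    show "(LEAST j. V m \<le> D j) \<le> j" if "lam j = m" for j
      using interlacing_first_index(3)[of j m] that by (meson less_irrefl not_le)
  qed
  then show ?thesis
    using interlacing_first_index(2) by simp
qed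

end

section \<open>Polynomials as Laurent series in \<open>X\<^sup>-\<^sup>1\<close>\<close>

lemma fls_nth_coeff_sum:
  assumes "degree p \<le> D"
  shows "fls_nth (\<Sum>i\<le>D. fls_const (coeff p i) * fls_X_inv ^ i) k =
           (if k \<le> 0 then coeff p (nat (- k)) else 0)"
proof -
  have "fls_nth (\<Sum>i\<le>D. fls_const (coeff p i) * fls_X_inv ^ i) k =
          (\<Sum>i\<le>D. if i = nat (- k) \<and> k \<le> 0 then coeff p i else 0)"
    by (simp add: fls_nth_sum) (intro sum.cong; auto)
  also have "\<dots> = (if k \<le> 0 then coeff p (nat (- k)) else 0)"
    using assms by (auto simp: coeff_eq_0)
  finally show ?thesis .
qed

lemma fls_nth_poly_fls: "fls_nth (poly_fls p) k = (if k \<le> 0 then coeff p (nat (- k)) else 0)"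
  unfolding poly_fls_def by (rule fls_nth_coeff_sum) simp

lemma poly_fls_eq_sum:
  "degree p \<le> D \<Longrightarrow> poly_fls p = (\<Sum>i\<le>D. fls_const (coeff p i) * fls_X_inv ^ i)"
  by (intro fls_eqI) (simp add: fls_nth_poly_fls fls_nth_coeff_sum)

lemma poly_fls_eq_iff [simp]: "poly_fls p = poly_fls q \<longleftrightarrow> p = q"
proof
  assume "poly_fls p = poly_fls q"
  then have "fls_nth (poly_fls p) (- int i) = fls_nth (poly_fls q) (- int i)" for i
    by simp
  then show "p = q"
    by (intro poly_eqI) (simp add: fls_nth_poly_fls)
qed simp

lemma poly_fls_0 [simp]: "poly_fls 0 = 0"
  and poly_fls_1 [simp]: "poly_fls 1 = 1"
  and poly_fls_add [simp]: "poly_fls (p + q) = poly_fls p + poly_fls q"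
  and poly_fls_diff [simp]: "poly_fls (p - r) = poly_fls p - poly_fls r"
  and poly_fls_smult [simp]: "poly_fls (smult c p) = fls_const c * poly_fls p"
  and poly_fls_pCons: "poly_fls (pCons a p) = fls_const a + fls_X_inv * poly_fls p"
  for p q :: "'a::comm_ring_1 poly"
  by (intro fls_eqI;
      auto simp: fls_nth_poly_fls fls_X_inv_times_conv_shift coeff_pCons nat_diff_distrib
           split: nat.split)+

lemma poly_fls_eq_0_iff [simp]: "poly_fls p = 0 \<longleftrightarrow> p = 0"
  using poly_fls_eq_iff[of p 0] by simp

lemma poly_fls_mult [simp]: "poly_fls (p * q) = poly_fls p * poly_fls (q::'a::comm_ring_1 poly)"
  by (induction p) (simp_all add: poly_fls_pCons algebra_simps)

lemma fls_subdegree_poly_fls: "p \<noteq> 0 \<Longrightarrow> fls_subdegree (poly_fls p) = - int (degree p)"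
  by (rule fls_subdegree_eqI) (auto simp: fls_nth_poly_fls coeff_eq_0)

lemma fls_subdegree_poly_fls_nonpos: "fls_subdegree (poly_fls p) \<le> 0"
  by (cases "p = 0") (simp_all add: fls_subdegree_poly_fls)

lemma fls_nth_mult_poly_fls:
  assumes "degree p \<le> D"
  shows "fls_nth (f * poly_fls p) k = (\<Sum>i\<le>D. coeff p i * fls_nth f (k + int i))"
proof -
  have "f * poly_fls p = (\<Sum>i\<le>D. fls_const (coeff p i) * (fls_X_inv ^ i * f))"
    by (simp add: poly_fls_eq_sum[OF assms] sum_distrib_left algebra_simps)
  then show ?thesis
    by (simp add: fls_nth_sum fls_X_inv_power_times_conv_shift)
qed

lemma fls_subdegree_prod_nonzero:
  fixes F :: "'i \<Rightarrow> 'a::field fls"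
  assumes "\<And>i. i \<in> I \<Longrightarrow> F i \<noteq> 0"
  shows "(\<Prod>i\<in>I. F i) \<noteq> 0 \<and> fls_subdegree (\<Prod>i\<in>I. F i) = (\<Sum>i\<in>I. fls_subdegree (F i))"
  using assms by (induction I rule: infinite_finite_induct) auto

lemma coeff_fls_floor: "coeff (fls_floor x) i = fls_nth x (- int i)"
  by (cases i) (simp_all add: fls_floor_def)

lemma fls_nth_frac: "fls_nth (x - poly_fls (fls_floor x)) k = (if k \<le> 0 then 0 else fls_nth x k)"
  by (simp add: fls_nth_poly_fls coeff_fls_floor)

lemma fls_subdegree_frac_pos:
  "x - poly_fls (fls_floor x) \<noteq> 0 \<Longrightarrow> 0 < fls_subdegree (x - poly_fls (fls_floor x))"
  using nth_fls_subdegree_nonzero[of "x - poly_fls (fls_floor x)"]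
  by (simp only: fls_nth_frac) (auto split: if_splits)

lemma degree_fls_floor:
  assumes "x \<noteq> 0" "fls_subdegree x \<le> 0"
  shows "int (degree (fls_floor x)) = - fls_subdegree x"
proof -
  have "degree (fls_floor x) \<le> nat (- fls_subdegree x)"
    by (rule degree_le) (auto simp: coeff_fls_floor intro: nth_less_subdegree_zero)
  moreover have "coeff (fls_floor x) (nat (- fls_subdegree x)) \<noteq> 0"
    using assms by (simp add: coeff_fls_floor)
  then have "nat (- fls_subdegree x) \<le> degree (fls_floor x)"
    by (rule le_degree)
  ultimately show ?thesis
    using assms by simp
qed

section \<open>Continued fraction expansion\<close>

definition cf_frac :: "'a::field fls \<Rightarrow> nat \<Rightarrow> 'a fls" where
  "cf_frac f n = cf_alpha f n - poly_fls (cf_a f n)"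

definition cf_remainder :: "'a::field fls \<Rightarrow> nat \<Rightarrow> 'a fls" where
  "cf_remainder f n = poly_fls (cf_p f n) - f * poly_fls (cf_q f n)"

lemma cf_alpha_Suc_eq: "cf_alpha f (Suc n) = inverse (cf_frac f n)"
  by (simp add: cf_frac_def cf_a_def)

lemma fls_subdegree_cf_frac_pos: "cf_frac f n \<noteq> 0 \<Longrightarrow> 0 < fls_subdegree (cf_frac f n)"
  unfolding cf_frac_def cf_a_def by (rule fls_subdegree_frac_pos)

lemma degree_cf_a_Suc:
  assumes "cf_frac f n \<noteq> 0"
  shows "int (degree (cf_a f (Suc n))) = fls_subdegree (cf_frac f n)"
  using degree_fls_floor[of "cf_alpha f (Suc n)"] fls_subdegree_cf_frac_pos[OF assms] assms
  by (simp add: cf_a_def cf_alpha_Suc_eq del: cf_alpha.simps)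

lemma cf_frac_mult_cf_frac_Suc:
  assumes "cf_frac f n \<noteq> 0"
  shows "cf_frac f n * cf_frac f (Suc n) = 1 - cf_frac f n * poly_fls (cf_a f (Suc n))"
proof -
  have "cf_frac f (Suc n) + poly_fls (cf_a f (Suc n)) = inverse (cf_frac f n)"
    by (simp add: cf_frac_def cf_alpha_Suc_eq del: cf_alpha.simps)
  then have "cf_frac f n * (cf_frac f (Suc n) + poly_fls (cf_a f (Suc n))) = 1"
    using assms by simp
  then show ?thesis
    by (simp add: algebra_simps)
qed

lemma cf_remainder_eq_prod:
  "(\<And>i. i < n \<Longrightarrow> cf_frac f i \<noteq> 0) \<Longrightarrow> cf_remainder f n = (- 1) ^ Suc n * (\<Prod>i\<le>n. cf_frac f i)"
proof (induction n rule: induct_nat_012)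
  case 0
  then show ?case
    by (simp add: cf_remainder_def cf_frac_def cf_a_def)
next
  case 1
  have "cf_remainder f 1 = 1 - cf_frac f 0 * poly_fls (cf_a f 1)"
    by (simp add: cf_remainder_def cf_frac_def cf_a_def algebra_simps)
  also have "\<dots> = cf_frac f 0 * cf_frac f 1"
    using cf_frac_mult_cf_frac_Suc[of f 0] 1 by simp
  finally show ?case
    by simp
next
  case (ge2 n)
  let ?A = "poly_fls (cf_a f (Suc (Suc n)))" and ?P = "\<Prod>i\<le>n. cf_frac f i"
  have "cf_remainder f (Suc (Suc n)) = ?A * cf_remainder f (Suc n) + cf_remainder f n"
    by (simp add: cf_remainder_def algebra_simps)
  also have "\<dots> = (- 1) ^ Suc n * ?P * (1 - cf_frac f (Suc n) * ?A)"
    using ge2 by (simp add: algebra_simps)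
  also have "\<dots> = (- 1) ^ Suc (Suc (Suc n)) * (\<Prod>i\<le>Suc (Suc n). cf_frac f i)"
    using cf_frac_mult_cf_frac_Suc[of f "Suc n"] ge2.prems by (simp add: mult.assoc)
  finally show ?case .
qed

lemma cf_det: "cf_p f (Suc n) * cf_q f n - cf_p f n * cf_q f (Suc n) = (- 1) ^ n"
  by (induction n) (simp_all add: algebra_simps)

lemma degree_cf_q:
  "(\<And>i. i < n \<Longrightarrow> cf_frac f i \<noteq> 0) \<Longrightarrow>
     cf_q f n \<noteq> 0 \<and> degree (cf_q f n) = (\<Sum>i<n. degree (cf_a f (Suc i)))"
proof (induction n rule: induct_nat_012)
  case 0
  then show ?case
    by simp
next
  case 1
  then show ?case
    using degree_cf_a_Suc[of f 0] fls_subdegree_cf_frac_pos[of f 0] by auto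
next
  case (ge2 n)
  let ?a = "cf_a f (Suc (Suc n))"
  have "0 < degree ?a"
    using degree_cf_a_Suc[of f "Suc n"] fls_subdegree_cf_frac_pos[of f "Suc n"] ge2.prems by simp
  then have "?a \<noteq> 0"
    by auto
  with ge2 have "degree (?a * cf_q f (Suc n)) = degree ?a + degree (cf_q f (Suc n))"
    by (simp add: degree_mult_eq)
  with \<open>0 < degree ?a\<close> ge2 have "degree (cf_q f (Suc (Suc n))) = degree ?a + degree (cf_q f (Suc n))"
    by (simp add: degree_add_eq_left)
  with \<open>0 < degree ?a\<close> ge2 show ?case
    by auto
qed

lemma cf_frac_nonzero:
  assumes "\<not> is_rational_fls f"
  shows "cf_frac f n \<noteq> 0"
proof (induction n rule: less_induct)
  case (less n)
  show ?case
  proof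
    assume "cf_frac f n = 0"
    then have "(\<Prod>i\<le>n. cf_frac f i) = 0"
      by (intro prod_zero) auto
    with less have "cf_remainder f n = 0"
      by (simp add: cf_remainder_eq_prod)
    then have "f * poly_fls (cf_q f n) = poly_fls (cf_p f n)"
      by (simp add: cf_remainder_def)
    moreover have "cf_q f n \<noteq> 0"
      using degree_cf_q less by blast
    ultimately show False
      using assms unfolding is_rational_fls_def by blast
  qed
qed

lemma cf_cross_eq_imp_multiple:
  assumes "p * cf_q f l = q * cf_p f l"
  shows "\<exists>h. p = h * cf_p f l \<and> q = h * cf_q f l"
proof (cases l)
  case 0
  with assms show ?thesis
    by (intro exI[of _ q]) (simp add: mult.commute)
next
  case (Suc m)
  let ?u = "cf_p f l" and ?v = "cf_q f l" and ?e = "(- 1 :: 'a poly) ^ m"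
  have det: "?u * cf_q f m - cf_p f m * ?v = ?e"
    using cf_det[of f m] Suc by simp
  have "?e * ?e = 1"
    by (simp flip: power_add)
  define h where "h = ?e * (p * cf_q f m - q * cf_p f m)"
  have "h * ?u = ?e * p * (?u * cf_q f m - cf_p f m * ?v)"
    by (simp add: h_def assms[symmetric] algebra_simps)
  also have "\<dots> = p"
    by (simp add: det \<open>?e * ?e = 1\<close> mult.commute mult.left_commute)
  finally have "p = h * ?u" ..
  have "h * ?v = ?e * q * (?u * cf_q f m - cf_p f m * ?v)"
    by (simp add: h_def assms algebra_simps)
  also have "\<dots> = q"
    by (simp add: det \<open>?e * ?e = 1\<close> mult.commute mult.left_commute)
  finally have "q = h * ?v" ..
  with \<open>p = h * ?u\<close> show ?thesis
    by blast
qed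

context
  fixes f :: "'a::field fls"
  assumes irrational: "\<not> is_rational_fls f"
begin

lemma cf_q_nonzero: "cf_q f n \<noteq> 0"
  and degree_cf_q_eq_sum: "degree (cf_q f n) = (\<Sum>i<n. degree (cf_a f (Suc i)))"
  using degree_cf_q[OF cf_frac_nonzero[OF irrational]] by blast+

lemma degree_cf_q_Suc: "degree (cf_q f (Suc n)) = degree (cf_q f n) + degree (cf_a f (Suc n))"
  by (simp add: degree_cf_q_eq_sum)

lemma strict_mono_degree_cf_q: "strict_mono (\<lambda>n. degree (cf_q f n))"
proof (rule strict_mono_Suc_iff[THEN iffD2], intro allI)
  fix n
  have "0 < degree (cf_a f (Suc n))"
    using degree_cf_a_Suc[of f n] fls_subdegree_cf_frac_pos[of f n] cf_frac_nonzero[OF irrational]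
    by simp
  then show "degree (cf_q f n) < degree (cf_q f (Suc n))"
    by (simp add: degree_cf_q_Suc)
qed

lemma fls_subdegree_cf_remainder:
  "cf_remainder f n \<noteq> 0 \<and> fls_subdegree (cf_remainder f n) = int (degree (cf_q f (Suc n)))"
proof -
  have frac: "(\<Prod>i\<le>n. cf_frac f i) \<noteq> 0 \<and>
      fls_subdegree (\<Prod>i\<le>n. cf_frac f i) = (\<Sum>i\<le>n. fls_subdegree (cf_frac f i))"
    by (rule fls_subdegree_prod_nonzero) (rule cf_frac_nonzero[OF irrational])
  have "(\<Sum>i\<le>n. fls_subdegree (cf_frac f i)) = int (\<Sum>i<Suc n. degree (cf_a f (Suc i)))"
    by (simp add: lessThan_Suc_atMost degree_cf_a_Suc cf_frac_nonzero[OF irrational])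
  also have "\<dots> = int (degree (cf_q f (Suc n)))"
    by (simp only: degree_cf_q_eq_sum)
  moreover have "cf_remainder f n = (- 1) ^ Suc n * (\<Prod>i\<le>n. cf_frac f i)"
    using cf_remainder_eq_prod cf_frac_nonzero[OF irrational] .
  ultimately show ?thesis
    using frac by (cases "even n") simp_all
qed

lemma degree_multiple_cf_q:
  "h \<noteq> 0 \<Longrightarrow> degree (h * cf_q f l) = degree h + degree (cf_q f l)"
  by (simp add: degree_mult_eq cf_q_nonzero)

lemma fls_subdegree_multiple_cf_remainder:
  assumes "h \<noteq> 0"
  shows "fls_subdegree (poly_fls (h * cf_p f l) - f * poly_fls (h * cf_q f l)) =
           int (degree (cf_q f (Suc l))) - int (degree h)"
proof -
  have "poly_fls (h * cf_p f l) - f * poly_fls (h * cf_q f l) = poly_fls h * cf_remainder f l"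
    by (simp add: cf_remainder_def algebra_simps)
  then show ?thesis
    using assms fls_subdegree_cf_remainder[of l] by (simp add: fls_subdegree_poly_fls)
qed

lemma good_approximation_is_convergent_multiple:
  assumes "q \<noteq> 0" and good: "int (degree q) < fls_subdegree (poly_fls p - f * poly_fls q)"
  shows "\<exists>l h. h \<noteq> 0 \<and> p = h * cf_p f l \<and> q = h * cf_q f l"
proof -
  obtain l where l: "degree (cf_q f l) \<le> degree q" "degree q < degree (cf_q f (Suc l))"
    using strict_mono_bracket_exists[OF strict_mono_degree_cf_q, of "degree q"] by auto
  let ?E = "poly_fls p - f * poly_fls q"
  let ?A = "poly_fls (cf_q f l) * ?E" and ?B = "poly_fls q * cf_remainder f l"
  have "?E \<noteq> 0"
    using good by (intro notI) simp
  then have A: "0 < fls_subdegree ?A"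
    using good l(1) cf_q_nonzero[of l] by (simp add: fls_subdegree_poly_fls)
  have B: "0 < fls_subdegree ?B"
    using fls_subdegree_cf_remainder[of l] l(2) \<open>q \<noteq> 0\<close> by (simp add: fls_subdegree_poly_fls)
  have AB: "poly_fls (p * cf_q f l - q * cf_p f l) = ?A - ?B"
    by (simp add: cf_remainder_def algebra_simps)
  \<comment> \<open>\<open>p q\<^sub>l - q p\<^sub>l\<close> is a polynomial of positive order, hence zero.\<close>
  have "p * cf_q f l - q * cf_p f l = 0"
  proof (rule ccontr)
    assume "p * cf_q f l - q * cf_p f l \<noteq> 0"
    then have "?A - ?B \<noteq> 0"
      unfolding AB[symmetric] by (simp only: poly_fls_eq_0_iff not_False_eq_True)
    then have "min (fls_subdegree ?A) (fls_subdegree ?B) \<le> fls_subdegree (?A - ?B)"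
      by (rule fls_subdegree_minus)
    with A B have "0 < fls_subdegree (poly_fls (p * cf_q f l - q * cf_p f l))"
      unfolding AB by linarith
    then show False
      using fls_subdegree_poly_fls_nonpos not_le by blast
  qed
  then obtain h where "p = h * cf_p f l" "q = h * cf_q f l"
    using cf_cross_eq_imp_multiple by (metis right_minus_eq)
  with \<open>q \<noteq> 0\<close> show ?thesis
    by auto
qed

lemma convergent_index_map:
  fixes tp tq :: "nat \<Rightarrow> 'a poly" and D :: "nat \<Rightarrow> nat"
  assumes D: "strict_mono D" "D 0 = 0"
    and tq: "\<And>n. tq n \<noteq> 0" "\<And>n. degree (tq n) \<le> D n"
    and approx: "\<And>n. int (D (Suc n)) \<le> fls_subdegree (poly_fls (tp n) - f * poly_fls (tq n))"
  shows "\<exists>lam :: nat \<Rightarrow> nat.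
     (\<forall>n. (\<exists>h. h \<noteq> 0 \<and> tp n = h * cf_p f (lam n) \<and> tq n = h * cf_q f (lam n)) \<and>
          (\<forall>l. (\<exists>h. h \<noteq> 0 \<and> tp n = h * cf_p f l \<and> tq n = h * cf_q f l) \<longrightarrow> l = lam n)) \<and>
     mono lam \<and> surj lam \<and>
     (\<forall>m n. n = (LEAST j. lam j = m) \<longrightarrow> degree (cf_q f m) = D n)"
proof -
  define V where "V l = degree (cf_q f l)" for l
  define multiple where
    "multiple n l \<longleftrightarrow> (\<exists>h. h \<noteq> 0 \<and> tp n = h * cf_p f l \<and> tq n = h * cf_q f l)" for n l
  have bracket: "V l \<le> D n \<and> D (Suc n) \<le> V (Suc l)" if "multiple n l" for n l
  proof -
    obtain h where h: "h \<noteq> 0" "tp n = h * cf_p f l" "tq n = h * cf_q f l"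
      using \<open>multiple n l\<close> unfolding multiple_def by blast
    show ?thesis
      using tq(2)[of n] approx[of n] degree_multiple_cf_q[OF h(1), of l]
        fls_subdegree_multiple_cf_remainder[OF h(1), of l]
      unfolding V_def h(2,3) by linarith
  qed
  have "\<exists>l. multiple n l" for n
  proof -
    have "int (degree (tq n)) < fls_subdegree (poly_fls (tp n) - f * poly_fls (tq n))"
      using tq(2)[of n] approx[of n] strict_monoD[OF D(1), of n "Suc n"] by linarith
    then show ?thesis
      using good_approximation_is_convergent_multiple[OF tq(1)] unfolding multiple_def by blast
  qed
  then obtain lam where lam: "\<And>n. multiple n (lam n)"
    by metis
  have Vmono: "strict_mono V"
    unfolding V_def by (rule strict_mono_degree_cf_q)
  have lower: "V (lam n) \<le> D n" and upper: "D (Suc n) \<le> V (Suc (lam n))" for n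
    using bracket[OF lam] by simp_all
  have unique: "l = lam n" if "multiple n l" for n l
  proof (rule strict_mono_bracket_unique[OF Vmono])
    have "D n < D (Suc n)"
      using strict_monoD[OF D(1), of n "Suc n"] by simp
    then show "V l \<le> D n" "D n < V (Suc l)" "V (lam n) \<le> D n" "D n < V (Suc (lam n))"
      using bracket[OF that] lower[of n] upper[of n] by linarith+
  qed
  show ?thesis
    using lam unique interlacing_mono[OF Vmono D lower upper] interlacing_surj[OF Vmono D lower upper]
      interlacing_Least[OF Vmono D lower upper]
    unfolding multiple_def V_def by metis
qed

end

section \<open>Valuations and reduction modulo the maximal ideal\<close>

lemma degree_map_poly_le: "f 0 = 0 \<Longrightarrow> degree (map_poly f p) \<le> degree p"
  by (rule degree_le) (simp add: coeff_map_poly coeff_eq_0)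

lemma finite_coeff_valuations: "finite {\<nu> (coeff q i) | i. coeff q i \<noteq> 0}"
  by (rule finite_subset[of _ "(\<lambda>i. \<nu> (coeff q i)) ` {..degree q}"]) (auto intro: le_degree)

lemma gauss_val_le:
  assumes "coeff q i \<noteq> 0"
  shows "gauss_val \<nu> q \<le> \<nu> (coeff q i)"
  unfolding gauss_val_def using finite_coeff_valuations assms by (auto intro: Min_le)

lemma gauss_val_attained:
  assumes "q \<noteq> 0"
  obtains i where "coeff q i \<noteq> 0" "\<nu> (coeff q i) = gauss_val \<nu> q"
proof -
  have "{\<nu> (coeff q i) | i. coeff q i \<noteq> 0} \<noteq> {}"
    using assms leading_coeff_neq_0[of q] by blast
  with finite_coeff_valuations have "gauss_val \<nu> q \<in> {\<nu> (coeff q i) | i. coeff q i \<noteq> 0}"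
    unfolding gauss_val_def by (rule Min_in)
  then show ?thesis
    using that by auto
qed

lemma zero_in_val_ring [simp]: "0 \<in> val_ring \<nu>"
  by (simp add: val_ring_def)

context
  fixes \<nu> :: "'a::field \<Rightarrow> int" and red :: "'a \<Rightarrow> 'b::field"
  assumes val: "discrete_valuation \<nu>" and res: "residue_map \<nu> red"
begin

lemma valuation_mult: "x \<noteq> 0 \<Longrightarrow> y \<noteq> 0 \<Longrightarrow> \<nu> (x * y) = \<nu> x + \<nu> y"
  using val by (simp add: discrete_valuation_def)

lemma valuation_add: "x \<noteq> 0 \<Longrightarrow> y \<noteq> 0 \<Longrightarrow> x + y \<noteq> 0 \<Longrightarrow> min (\<nu> x) (\<nu> y) \<le> \<nu> (x + y)"
  using val by (simp add: discrete_valuation_def)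

lemma valuation_1: "\<nu> 1 = 0"
  using valuation_mult[of 1 1] by simp

lemma valuation_uminus: "x \<noteq> 0 \<Longrightarrow> \<nu> (- x) = \<nu> x"
  using valuation_mult[of "- 1" "- 1"] valuation_mult[of "- 1" x] valuation_1 by simp

lemma valuation_power_int: "x \<noteq> 0 \<Longrightarrow> \<nu> (x powi k) = k * \<nu> x"
proof -
  assume "x \<noteq> 0"
  have power: "\<nu> (x ^ n) = int n * \<nu> x" for n
    by (induction n) (simp_all add: valuation_1 valuation_mult \<open>x \<noteq> 0\<close> algebra_simps)
  have "\<nu> (inverse (x ^ n)) = - \<nu> (x ^ n)" for n
    using valuation_mult[of "x ^ n" "inverse (x ^ n)"] valuation_1 \<open>x \<noteq> 0\<close> by simp
  with power show ?thesis
    by (cases "0 \<le> k") (simp_all add: power_int_def power_inverse)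
qed

lemma val_ring_add: "x \<in> val_ring \<nu> \<Longrightarrow> y \<in> val_ring \<nu> \<Longrightarrow> x + y \<in> val_ring \<nu>"
  unfolding val_ring_def using valuation_add[of x y] by fastforce

lemma val_ring_mult: "x \<in> val_ring \<nu> \<Longrightarrow> y \<in> val_ring \<nu> \<Longrightarrow> x * y \<in> val_ring \<nu>"
  unfolding val_ring_def using valuation_mult[of x y] by fastforce

lemma val_ring_uminus: "x \<in> val_ring \<nu> \<Longrightarrow> - x \<in> val_ring \<nu>"
  using valuation_uminus[of x] by (cases "x = 0") (auto simp: val_ring_def)

lemma val_ring_diff: "x \<in> val_ring \<nu> \<Longrightarrow> y \<in> val_ring \<nu> \<Longrightarrow> x - y \<in> val_ring \<nu>"
  using val_ring_add[of x "- y"] val_ring_uminus[of y] by simp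

lemma red_add: "x \<in> val_ring \<nu> \<Longrightarrow> y \<in> val_ring \<nu> \<Longrightarrow> red (x + y) = red x + red y"
  using res by (simp add: residue_map_def)

lemma red_mult: "x \<in> val_ring \<nu> \<Longrightarrow> y \<in> val_ring \<nu> \<Longrightarrow> red (x * y) = red x * red y"
  using res by (simp add: residue_map_def)

lemma red_0 [simp]: "red 0 = 0"
proof -
  have "red 0 + red 0 = red 0 + 0"
    using red_add[of 0 0] by simp
  then show ?thesis
    by (rule add_left_imp_eq)
qed

lemma red_diff: "x \<in> val_ring \<nu> \<Longrightarrow> y \<in> val_ring \<nu> \<Longrightarrow> red (x - y) = red x - red y"
  using red_add[OF val_ring_diff[of x y], of y] by (simp add: algebra_simps)

lemma red_nonzero: "x \<noteq> 0 \<Longrightarrow> \<nu> x = 0 \<Longrightarrow> red x \<noteq> 0"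
  using res by (simp add: residue_map_def val_ring_def max_ideal_def)

lemma val_ring_sum_red:
  "(\<And>i. i \<in> A \<Longrightarrow> x i \<in> val_ring \<nu>) \<Longrightarrow>
     (\<Sum>i\<in>A. x i) \<in> val_ring \<nu> \<and> red (\<Sum>i\<in>A. x i) = (\<Sum>i\<in>A. red (x i))"
  by (induction A rule: infinite_finite_induct) (simp_all add: val_ring_add red_add)

lemma primitive_multiple:
  assumes "\<pi> \<noteq> 0" "\<nu> \<pi> = 1" "q \<noteq> 0"
  defines "Q \<equiv> smult (\<pi> powi (- gauss_val \<nu> q)) q"
  shows "\<forall>i. coeff Q i \<in> val_ring \<nu>" and "map_poly red Q \<noteq> 0"
proof -
  let ?c = "\<pi> powi (- gauss_val \<nu> q)"
  have c: "?c \<noteq> 0" "\<nu> ?c = - gauss_val \<nu> q"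
    using assms(1,2) by (simp_all add: valuation_power_int)
  have coeff_val: "\<nu> (coeff Q i) = \<nu> (coeff q i) - gauss_val \<nu> q" if "coeff q i \<noteq> 0" for i
    using valuation_mult[OF c(1) that] c(2) by (simp add: Q_def)
  show "\<forall>i. coeff Q i \<in> val_ring \<nu>"
  proof
    fix i
    show "coeff Q i \<in> val_ring \<nu>"
      using coeff_val[of i] gauss_val_le[of q i \<nu>] by (cases "coeff q i = 0") (auto simp: val_ring_def Q_def)
  qed
  obtain i where i: "coeff q i \<noteq> 0" "\<nu> (coeff q i) = gauss_val \<nu> q"
    using gauss_val_attained[OF assms(3)] .
  then have "red (coeff Q i) \<noteq> 0"
    using coeff_val[OF i(1)] c(1) by (intro red_nonzero) (simp_all add: Q_def)
  then show "map_poly red Q \<noteq> 0"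
    by (metis coeff_0 coeff_map_poly red_0)
qed

context
  fixes \<alpha> :: "'a fls" and \<gamma> :: "'b fls"
  assumes alpha_integral: "\<forall>k. fls_nth \<alpha> k \<in> val_ring \<nu>"
    and gamma_red: "\<forall>k. fls_nth \<gamma> k = red (fls_nth \<alpha> k)"
begin

lemma fls_nth_mult_poly_fls_red:
  assumes "\<forall>i. coeff Q i \<in> val_ring \<nu>"
  shows "fls_nth (\<alpha> * poly_fls Q) k \<in> val_ring \<nu>"
    and "red (fls_nth (\<alpha> * poly_fls Q) k) = fls_nth (\<gamma> * poly_fls (map_poly red Q)) k"
proof -
  let ?x = "\<lambda>i. coeff Q i * fls_nth \<alpha> (k + int i)"
  have sum: "(\<Sum>i\<le>degree Q. ?x i) \<in> val_ring \<nu> \<and> red (\<Sum>i\<le>degree Q. ?x i) = (\<Sum>i\<le>degree Q. red (?x i))"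
    using assms alpha_integral by (intro val_ring_sum_red val_ring_mult) auto
  then show "fls_nth (\<alpha> * poly_fls Q) k \<in> val_ring \<nu>"
    by (simp add: fls_nth_mult_poly_fls[OF order_refl])
  have "fls_nth (\<gamma> * poly_fls (map_poly red Q)) k = (\<Sum>i\<le>degree Q. red (?x i))"
    using assms alpha_integral
    by (simp add: fls_nth_mult_poly_fls[OF degree_map_poly_le] coeff_map_poly gamma_red red_mult)
  with sum show "red (fls_nth (\<alpha> * poly_fls Q) k) = fls_nth (\<gamma> * poly_fls (map_poly red Q)) k"
    by (simp add: fls_nth_mult_poly_fls[OF order_refl])
qed

text \<open>If \<open>P - \<alpha> Q\<close> has positive order, \<open>P\<close> is the polynomial part of \<open>\<alpha> Q\<close>.\<close>

lemma coeff_in_val_ring_if_close: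
  assumes "\<forall>i. coeff Q i \<in> val_ring \<nu>" and "\<And>k. k \<le> 0 \<Longrightarrow> fls_nth (poly_fls P - \<alpha> * poly_fls Q) k = 0"
  shows "coeff P i \<in> val_ring \<nu>"
  using assms(2)[of "- int i"] fls_nth_mult_poly_fls_red(1)[OF assms(1), of "- int i"]
  by (simp add: fls_nth_poly_fls)

lemma fls_nth_reduced_difference:
  assumes "\<forall>i. coeff P i \<in> val_ring \<nu>" "\<forall>i. coeff Q i \<in> val_ring \<nu>"
  shows "fls_nth (poly_fls (map_poly red P) - \<gamma> * poly_fls (map_poly red Q)) k =
           red (fls_nth (poly_fls P - \<alpha> * poly_fls Q) k)"
proof -
  have "fls_nth (poly_fls P) k \<in> val_ring \<nu>"
    using assms(1) by (simp add: fls_nth_poly_fls val_ring_def)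
  then show ?thesis
    using fls_nth_mult_poly_fls_red[OF assms(2), of k]
    by (simp add: red_diff fls_nth_poly_fls coeff_map_poly)
qed

lemma reduced_normalized_convergent:
  fixes \<pi> :: 'a and n :: nat
  assumes "\<pi> \<noteq> 0" "\<nu> \<pi> = 1" and irrational: "\<not> is_rational_fls \<alpha>" "\<not> is_rational_fls \<gamma>"
  defines "c \<equiv> \<pi> powi (- gauss_val \<nu> (cf_q \<alpha> n))"
  defines "P \<equiv> smult c (cf_p \<alpha> n)" and "Q \<equiv> smult c (cf_q \<alpha> n)"
  shows "(\<forall>i. coeff P i \<in> val_ring \<nu>) \<and> (\<forall>i. coeff Q i \<in> val_ring \<nu>) \<and>
         map_poly red Q \<noteq> 0 \<and> degree (map_poly red Q) \<le> degree (cf_q \<alpha> n) \<and>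
         int (degree (cf_q \<alpha> (Suc n))) \<le>
           fls_subdegree (poly_fls (map_poly red P) - \<gamma> * poly_fls (map_poly red Q))"
proof -
  let ?d = "int (degree (cf_q \<alpha> (Suc n)))"
  have Q: "\<forall>i. coeff Q i \<in> val_ring \<nu>" "map_poly red Q \<noteq> 0"
    using primitive_multiple[OF assms(1,2) cf_q_nonzero[OF irrational(1)]]
    unfolding Q_def c_def by blast+
  have "poly_fls P - \<alpha> * poly_fls Q = fls_const c * cf_remainder \<alpha> n"
    by (simp add: P_def Q_def cf_remainder_def algebra_simps)
  then have small: "fls_nth (poly_fls P - \<alpha> * poly_fls Q) k = 0" if "k < ?d" for k
    using that fls_subdegree_cf_remainder[OF irrational(1), of n] by (simp add: nth_less_subdegree_zero)
  have "degree (cf_q \<alpha> n) < degree (cf_q \<alpha> (Suc n))"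
    using strict_mono_degree_cf_q[OF irrational(1)] by (simp add: strict_mono_Suc_iff)
  then have P: "\<forall>i. coeff P i \<in> val_ring \<nu>"
    using coeff_in_val_ring_if_close[OF Q(1)] small by simp
  let ?R = "poly_fls (map_poly red P) - \<gamma> * poly_fls (map_poly red Q)"
  have "?R \<noteq> 0"
    using irrational(2) Q(2) unfolding is_rational_fls_def by (metis right_minus_eq)
  then have "?d \<le> fls_subdegree ?R"
    by (rule fls_subdegree_geI) (simp only: fls_nth_reduced_difference[OF P Q(1)] small red_0)
  moreover have "degree (map_poly red Q) \<le> degree (cf_q \<alpha> n)"
    using degree_map_poly_le[of red Q] degree_smult_le[of c "cf_q \<alpha> n"] by (simp add: Q_def)
  ultimately show ?thesis
    using P Q by blast
qed

end

end

theorem mainTheorem4: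
  fixes \<nu> :: "'a::field \<Rightarrow> int" and \<pi> :: 'a and red :: "'a \<Rightarrow> 'b::field"
    and \<alpha> :: "'a fls" and \<gamma> :: "'b fls"
  assumes val: "discrete_valuation \<nu>"
    and unif: "\<pi> \<noteq> 0" "\<nu> \<pi> = 1"
    and res: "residue_map \<nu> red"
    and char: "(2::'b) \<noteq> 0"
    and alpha_O: "\<forall>n. fls_nth \<alpha> n \<in> val_ring \<nu>"
    and LC_unit: "fls_LC \<alpha> \<noteq> 0" "\<nu> (fls_LC \<alpha>) = 0"
    and ord_alpha: "fls_ord \<alpha> \<le> 0"
    and gamma_def: "\<forall>n. fls_nth \<gamma> n = red (fls_nth \<alpha> n)"
    and irr_alpha: "\<not> is_rational_fls \<alpha>"
    and irr_gamma: "\<not> is_rational_fls \<gamma>"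
  shows
    "(\<forall>n. let c = \<pi> powi (- gauss_val \<nu> (cf_q \<alpha> n));
             tp = map_poly red (smult c (cf_p \<alpha> n));
             tq = map_poly red (smult c (cf_q \<alpha> n))
         in (\<forall>i. coeff (smult c (cf_p \<alpha> n)) i \<in> val_ring \<nu>) \<and>
            (\<forall>i. coeff (smult c (cf_q \<alpha> n)) i \<in> val_ring \<nu>) \<and>
            tq \<noteq> 0 \<and>
            int (degree tq) < fls_ord (poly_fls tp - \<gamma> * poly_fls tq)) \<and>
     (\<exists>lam :: nat \<Rightarrow> nat.
        (\<forall>n. let c = \<pi> powi (- gauss_val \<nu> (cf_q \<alpha> n));
               tp = map_poly red (smult c (cf_p \<alpha> n));
               tq = map_poly red (smult c (cf_q \<alpha> n))
           in (\<exists>h. h \<noteq> 0 \<and> tp = h * cf_p \<gamma> (lam n) \<and> tq = h * cf_q \<gamma> (lam n)) \<and>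
              (\<forall>l. (\<exists>h. h \<noteq> 0 \<and> tp = h * cf_p \<gamma> l \<and> tq = h * cf_q \<gamma> l) \<longrightarrow> l = lam n)) \<and>
        mono lam \<and> surj lam \<and>
        (\<forall>m n. n = (LEAST j. lam j = m) \<longrightarrow> degree (cf_q \<gamma> m) = degree (cf_q \<alpha> n)))"
proof -
  define tp where "tp n = map_poly red (smult (\<pi> powi (- gauss_val \<nu> (cf_q \<alpha> n))) (cf_p \<alpha> n))" for n
  define tq where "tq n = map_poly red (smult (\<pi> powi (- gauss_val \<nu> (cf_q \<alpha> n))) (cf_q \<alpha> n))" for n
  have reduced: "(\<forall>i. coeff (smult (\<pi> powi (- gauss_val \<nu> (cf_q \<alpha> n))) (cf_p \<alpha> n)) i \<in> val_ring \<nu>) \<and>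
      (\<forall>i. coeff (smult (\<pi> powi (- gauss_val \<nu> (cf_q \<alpha> n))) (cf_q \<alpha> n)) i \<in> val_ring \<nu>) \<and>
      tq n \<noteq> 0 \<and> degree (tq n) \<le> degree (cf_q \<alpha> n) \<and>
      int (degree (cf_q \<alpha> (Suc n))) \<le> fls_subdegree (poly_fls (tp n) - \<gamma> * poly_fls (tq n))" for n
    unfolding tp_def tq_def
    by (rule reduced_normalized_convergent[OF val res alpha_O gamma_def unif irr_alpha irr_gamma])
  have good: "int (degree (tq n)) < fls_ord (poly_fls (tp n) - \<gamma> * poly_fls (tq n))" for n
  proof -
    have "degree (cf_q \<alpha> n) < degree (cf_q \<alpha> (Suc n))"
      using strict_mono_degree_cf_q[OF irr_alpha] by (simp add: strict_mono_Suc_iff)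
    with reduced[of n] show ?thesis
      unfolding fls_ord_def by linarith
  qed
  show ?thesis
    unfolding Let_def tp_def[symmetric] tq_def[symmetric]
    using reduced good
    by (intro conjI[OF allI convergent_index_map[OF irr_gamma strict_mono_degree_cf_q[OF irr_alpha]]])
      simp_all
qed

end
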